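(* Under the standing assumptions of the context, \[ \sum_{\ell\in\mathbb N:\ \mathcal K_\ell\ne\emptyset}\frac1\ell<\infty . \]
   Context: Standing assumptions: $A=\{0,1\}$, $\Sigma=A^{\mathbb N_0}$ with metric $\rho(y,z)=2^{-\min\{i\ge0:\,y_i\ne z_i\}}$ ($y\ne z$) and shift $\sigma$. $\zeta:A\to A^*$ is a binary substitution of constant length $q\ge2$, primitive (for some $k$, every letter occurs in $\zeta^k(a)$ for all $a$), aperiodic (its subshift $X_\zeta$ contains a non-$\sigma$-periodic sequence), with $\zeta(0)$ starting with $0$; $x=\lim_k\zeta^k(0)$ is its fixed point starting with $0$. In the infinite recurrence plot $R(x,\infty,1/2)$ (indices $i,j\in\mathbb N_0$, entry $1$ iff $x_i=x_j$), a line of length $\ell$ is $(i,j,\ell)$ with $i\ne j$, entries $(i+k,j+k)=1$ for $0\le k<\ell$, entry $(i-1,j-1)=0$ if $\min\{i,j\}>0$, entry $(i+\ell,j+\ell)=0$; it is inner if $\min\{i,j\}>0$. $\mathcal K_\ell=\{(i,j)\in\mathbb N^2:(i,j,\ell)\text{ is an inner line in }R(x,\infty,1/2)\}$. *)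

theory Defs
  imports "HOL-Analysis.Analysis"
begin

text \<open>Binary alphabet A = {0,1} (as naturals); a substitution is a map nat => nat list,
  only its values on {0,1} matter.\<close>

definition alph :: "nat set" where "alph = {0, 1}"

fun subst_word_pow :: "(nat \<Rightarrow> nat list) \<Rightarrow> nat \<Rightarrow> nat list \<Rightarrow> nat list" where
  "subst_word_pow \<zeta> 0 w = w"
| "subst_word_pow \<zeta> (Suc k) w = concat (map \<zeta> (subst_word_pow \<zeta> k w))"

definition subst_pow :: "(nat \<Rightarrow> nat list) \<Rightarrow> nat \<Rightarrow> nat \<Rightarrow> nat list" where
  "subst_pow \<zeta> k a = subst_word_pow \<zeta> k [a]"

definition binary_subst :: "(nat \<Rightarrow> nat list) \<Rightarrow> bool" where
  "binary_subst \<zeta> \<longleftrightarrow> (\<forall>a\<in>alph. set (\<zeta> a) \<subseteq> alph)"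

definition constant_length :: "(nat \<Rightarrow> nat list) \<Rightarrow> nat \<Rightarrow> bool" where
  "constant_length \<zeta> q \<longleftrightarrow> (\<forall>a\<in>alph. length (\<zeta> a) = q)"

definition primitive_subst :: "(nat \<Rightarrow> nat list) \<Rightarrow> bool" where
  "primitive_subst \<zeta> \<longleftrightarrow> (\<exists>k. \<forall>a\<in>alph. \<forall>b\<in>alph. b \<in> set (subst_pow \<zeta> k a))"

definition subst_language :: "(nat \<Rightarrow> nat list) \<Rightarrow> nat list set" where
  "subst_language \<zeta> = {w. \<exists>k. \<exists>a\<in>alph. \<exists>u v. subst_pow \<zeta> k a = u @ w @ v}"

definition subshift :: "(nat \<Rightarrow> nat list) \<Rightarrow> (nat \<Rightarrow> nat) set" where
  "subshift \<zeta> = {y. (\<forall>n. y n \<in> alph) \<and>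
      (\<forall>i n. map (\<lambda>m. y (i + m)) [0..<n] \<in> subst_language \<zeta>)}"

definition shift_periodic :: "(nat \<Rightarrow> nat) \<Rightarrow> bool" where
  "shift_periodic y \<longleftrightarrow> (\<exists>p>0. \<forall>n. y (n + p) = y n)"

definition aperiodic_subst :: "(nat \<Rightarrow> nat list) \<Rightarrow> bool" where
  "aperiodic_subst \<zeta> \<longleftrightarrow> (\<exists>y\<in>subshift \<zeta>. \<not> shift_periodic y)"

text \<open>x is the limit of zeta^k(0): it agrees with every zeta^k(0) on its length.\<close>
definition is_fixed_point_limit :: "(nat \<Rightarrow> nat list) \<Rightarrow> (nat \<Rightarrow> nat) \<Rightarrow> bool" where
  "is_fixed_point_limit \<zeta> x \<longleftrightarrow>
     (\<forall>k i. i < length (subst_pow \<zeta> k 0) \<longrightarrow> x i = subst_pow \<zeta> k 0 ! i)"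

text \<open>Entry of the infinite recurrence plot R(x,infinity,1/2).\<close>
definition rp_entry :: "(nat \<Rightarrow> nat) \<Rightarrow> nat \<Rightarrow> nat \<Rightarrow> bool" where
  "rp_entry x i j \<longleftrightarrow> x i = x j"

definition rp_line :: "(nat \<Rightarrow> nat) \<Rightarrow> nat \<Rightarrow> nat \<Rightarrow> nat \<Rightarrow> bool" where
  "rp_line x i j l \<longleftrightarrow> i \<noteq> j
     \<and> (\<forall>k<l. rp_entry x (i + k) (j + k))
     \<and> (min i j > 0 \<longrightarrow> \<not> rp_entry x (i - 1) (j - 1))
     \<and> \<not> rp_entry x (i + l) (j + l)"

definition inner_lines :: "(nat \<Rightarrow> nat) \<Rightarrow> nat \<Rightarrow> (nat \<times> nat) set" where
  "inner_lines x l = {(i, j). i > 0 \<and> j > 0 \<and> rp_line x i j l}"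

end

theory Submission
  imports Defs
begin

text \<open>Lengths of long inner lines satisfy an affine recursion l = q L + c with L again
  such a length, so they lie on finitely many orbits of L \<mapsto> q L + c, each of which
  contributes a geometric series. The recursion comes from desubstituting: by
  recognizability, two long equal factors of x start in the same column of their blocks,
  so a long inner line is the image of an inner line of x under \<zeta>, extended by the fixed
  number c of agreeing columns at either end. Recognizability itself holds because a
  misaligned coincidence of two block codings forces every column of \<zeta> to be constant
  unless one of the codings has long stretches of period 2, and a primitive aperiodic
  fixed point has none.\<close>

lemma length_concat_map_const:
  "(\<And>a. a \<in> set w \<Longrightarrow> length (h a) = q) \<Longrightarrow> length (concat (map h w)) = q * length w"
  by (induction w) auto

lemma nth_concat_map_const:
  assumes "\<And>a. a \<in> set w \<Longrightarrow> length (h a) = q" "n < length w" "r < q"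
  shows "concat (map h w) ! (q * n + r) = h (w ! n) ! r"
  using assms
proof (induction w arbitrary: n)
  case Nil
  then show ?case by simp
next
  case (Cons a w)
  show ?case
  proof (cases n)
    case 0
    then show ?thesis using Cons.prems by (simp add: nth_append)
  next
    case (Suc n')
    have "q * n + r = q + (q * n' + r)" using Suc by simp
    then have "concat (map h (a # w)) ! (q * n + r) = concat (map h w) ! (q * n' + r)"
      using Cons.prems(1) by (simp add: nth_append)
    also have "\<dots> = h (w ! n') ! r" using Cons Suc by simp
    finally show ?thesis using Suc by simp
  qed
qed

section \<open>Sums over orbits of an affine map\<close>

lemma funpow_affine_ge_pow2:
  fixes q c l :: nat
  assumes "2 \<le> q" "1 \<le> l"
  shows "2 ^ m \<le> ((\<lambda>L. q * L + c) ^^ m) l"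
proof (induction m)
  case 0
  then show ?case using assms by simp
next
  case (Suc m)
  have "2 * 2 ^ m \<le> q * ((\<lambda>L. q * L + c) ^^ m) l" by (rule mult_le_mono[OF assms(1) Suc.IH])
  then show ?case by simp
qed

lemma summable_on_inverse_affine_orbit:
  fixes q c l :: nat
  assumes q: "2 \<le> q" and l: "1 \<le> l"
  shows "(\<lambda>n. 1 / real n) summable_on range (\<lambda>m. ((\<lambda>L. q * L + c) ^^ m) l)"
proof -
  let ?g = "\<lambda>m. ((\<lambda>L. q * L + c) ^^ m) l"
  have g_ge: "(2::real) ^ m \<le> real (?g m)" for m
    using funpow_affine_ge_pow2[OF q l, of m c] by (metis of_nat_le_iff of_nat_numeral of_nat_power)
  have "strict_mono ?g"
  proof (rule strict_monoI_Suc)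
    fix m
    have "(1::nat) \<le> 2 ^ m" by simp
    then have "1 \<le> ?g m" using funpow_affine_ge_pow2[OF q l, of m c] by linarith
    then have "?g m < q * ?g m" using q by (simp add: less_le_trans[OF _ mult_right_mono])
    then have "?g m < q * ?g m + c" by (rule trans_less_add1)
    then show "?g m < ?g (Suc m)" by simp
  qed
  then have inj: "inj ?g" by (rule strict_mono_imp_inj_on)
  have bound: "norm (1 / real (?g m)) \<le> (1 / 2) ^ m" for m
  proof -
    have "(0::real) < 2 ^ m" by simp
    moreover have "0 < real (?g m)" using g_ge[of m] calculation by linarith
    ultimately have "1 / real (?g m) \<le> 1 / 2 ^ m"
      using g_ge[of m] by (intro divide_left_mono) auto
    then show ?thesis by (simp add: power_one_over)
  qed
  have "summable (\<lambda>m. 1 / real (?g m))"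
    by (rule summable_comparison_test[OF _ summable_geometric]) (use bound in auto)
  then have "(\<lambda>m. 1 / real (?g m)) summable_on UNIV"
    by (subst summable_on_UNIV_nonneg_real_iff) auto
  then show ?thesis using summable_on_reindex[OF inj, of "\<lambda>n. 1 / real n"] by (simp add: o_def)
qed

lemma summable_on_finite_UN:
  fixes g :: "'a \<Rightarrow> real"
  assumes "finite I" "\<And>i. i \<in> I \<Longrightarrow> g summable_on A i"
  shows "g summable_on (\<Union>i\<in>I. A i)"
  using assms by (induction I rule: finite_induct) (auto intro: summable_on_union)

text \<open>Every element of such a set lies on the orbit of one of the finitely many elements below
  M under the expanding map L \<mapsto> q L + c, and each orbit grows geometrically.\<close>
lemma summable_on_inverse_if_affine_descent:
  fixes S :: "nat set" and q c M :: nat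
  assumes q: "2 \<le> q" and pos: "\<And>l. l \<in> S \<Longrightarrow> 1 \<le> l"
    and descent: "\<And>l. l \<in> S \<Longrightarrow> M \<le> l \<Longrightarrow> \<exists>L\<in>S. l = q * L + c"
  shows "(\<lambda>l. 1 / real l) summable_on S"
proof -
  let ?orbit = "\<lambda>f. range (\<lambda>m. ((\<lambda>L. q * L + c) ^^ m) f)"
  have "l \<in> (\<Union>f\<in>{1..M}. ?orbit f)" if "l \<in> S" for l
    using that
  proof (induction l rule: less_induct)
    case (less l)
    show ?case
    proof (cases "l < M")
      case True
      then show ?thesis using pos[OF less.prems] by (intro UN_I[of l]) (auto intro: range_eqI[of _ _ 0])
    next
      case False
      then obtain L where L: "L \<in> S" "l = q * L + c" using descent[OF less.prems] by auto
      have "2 * L \<le> q * L" using q by (rule mult_right_mono) simp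
      then have "L < l" using L pos[OF L(1)] by linarith
      then obtain f m where "f \<in> {1..M}" "L = ((\<lambda>L. q * L + c) ^^ m) f"
        using less.IH L(1) by blast
      then show ?thesis using L(2) by (intro UN_I[of f]) (auto intro: range_eqI[of _ _ "Suc m"])
    qed
  qed
  moreover have "(\<lambda>l. 1 / real l) summable_on (\<Union>f\<in>{1..M}. ?orbit f)"
    by (intro summable_on_finite_UN summable_on_inverse_affine_orbit[OF q]) auto
  ultimately show ?thesis by (meson subsetI summable_on_subset_banach)
qed

section \<open>Misaligned block codings\<close>

definition period2_window :: "(nat \<Rightarrow> bool) \<Rightarrow> nat \<Rightarrow> nat \<Rightarrow> bool" where
  "period2_window X n P \<longleftrightarrow> (\<forall>k<P. X (n + k + 2) = X (n + k))"

lemma period2_window_if_const: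
  assumes "\<And>t. t \<le> Suc P \<Longrightarrow> X (n + t) = X n"
  shows "period2_window X n P"
  unfolding period2_window_def
proof (intro allI impI)
  fix k assume "k < P"
  then show "X (n + k + 2) = X (n + k)" using assms[of "k + 2"] assms[of k] by simp
qed

lemma period2_window_if_successor_functional:
  fixes Y :: "nat \<Rightarrow> bool"
  assumes "\<And>t t'. t \<le> Suc P \<Longrightarrow> t' \<le> Suc P \<Longrightarrow> Y t = Y t' \<Longrightarrow> Y (Suc t) = Y (Suc t')"
  shows "period2_window Y 1 P"
  unfolding period2_window_def
proof (intro allI impI)
  fix k assume "k < P"
  then have "k \<le> Suc P" "Suc k \<le> Suc P" "Suc (Suc k) \<le> Suc P" by auto
  then have "Y k = Y (Suc k) \<Longrightarrow> Y (Suc k) = Y (Suc (Suc k))"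
    and "Y k = Y (Suc (Suc k)) \<Longrightarrow> Y (Suc k) = Y (Suc (Suc (Suc k)))"
    and "Y (Suc k) = Y (Suc (Suc k)) \<Longrightarrow> Y (Suc (Suc k)) = Y (Suc (Suc (Suc k)))"
    using assms by blast+
  then show "Y (1 + k + 2) = Y (1 + k)"
    by (cases "Y k"; cases "Y (Suc k)"; cases "Y (Suc (Suc k))"; cases "Y (Suc (Suc (Suc k)))")
      (auto simp: numeral_2_eq_2)
qed

lemma bool_fun_eq_iff: "h True \<noteq> h False \<Longrightarrow> h a = h b \<longleftrightarrow> a = b"
  by (cases a; cases b) auto

lemma bool_fun_const: "h True = h False \<Longrightarrow> h a = h b"
  by (cases a; cases b) auto

lemma bool_fun_const_if_eq: "(a::bool) \<noteq> b \<Longrightarrow> h a = h b \<Longrightarrow> h True = h False"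
  by (cases a; cases b) auto

text \<open>W and Y are block codings of one word: block t of W, read through the columns
  f 0, ..., f (q-1), appears shifted by e inside blocks t and t+1 of Y.\<close>
locale misaligned_codings =
  fixes f :: "nat \<Rightarrow> bool \<Rightarrow> bool" and q e T :: nat and W Y :: "nat \<Rightarrow> bool"
  assumes shift_pos: "0 < e" and shift_less: "e < q"
    and same_block: "\<And>t r. t \<le> T \<Longrightarrow> r + e < q \<Longrightarrow> f r (W t) = f (r + e) (Y t)"
    and next_block:
      "\<And>t r. t \<le> T \<Longrightarrow> r < q \<Longrightarrow> q \<le> r + e \<Longrightarrow> f r (W t) = f (r + e - q) (Y (Suc t))"
    and W_nonconst: "\<exists>t\<le>T. W t \<noteq> W 0"
    and Y_successor_not_functional:
      "\<not> (\<forall>t t'. t \<le> T \<longrightarrow> t' \<le> T \<longrightarrow> Y t = Y t' \<longrightarrow> Y (Suc t) = Y (Suc t'))"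
begin

lemma W_column_nonconst:
  assumes "f r True \<noteq> f r False"
  shows "\<exists>t\<le>T. f r (W t) \<noteq> f r (W 0)"
proof -
  obtain t where "t \<le> T" "W t \<noteq> W 0" using W_nonconst by blast
  then show ?thesis using bool_fun_eq_iff[OF assms, of "W t" "W 0"] by blast
qed

lemma W_eq_iff_Y_eq:
  assumes r: "r + e < q" "f r True \<noteq> f r False" and t: "t \<le> T" "t' \<le> T"
  shows "W t = W t' \<longleftrightarrow> Y t = Y t'"
proof -
  have partner: "f (r + e) True \<noteq> f (r + e) False"
  proof
    assume "f (r + e) True = f (r + e) False"
    then have "f r (W s) = f r (W 0)" if "s \<le> T" for s
      using same_block[OF that r(1)] same_block[of 0, OF _ r(1)] bool_fun_const[of "f (r + e)" "Y s" "Y 0"]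
      by simp
    then show False using W_column_nonconst[OF r(2)] by blast
  qed
  have "W t = W t' \<longleftrightarrow> f r (W t) = f r (W t')" by (rule bool_fun_eq_iff[OF r(2), symmetric])
  also have "\<dots> \<longleftrightarrow> f (r + e) (Y t) = f (r + e) (Y t')"
    using same_block[OF t(1) r(1)] same_block[OF t(2) r(1)] by simp
  also have "\<dots> \<longleftrightarrow> Y t = Y t'" by (rule bool_fun_eq_iff[OF partner])
  finally show ?thesis .
qed

lemma W_eq_iff_Y_Suc_eq:
  assumes r: "r < q" "q \<le> r + e" "f r True \<noteq> f r False" and t: "t \<le> T" "t' \<le> T"
  shows "W t = W t' \<longleftrightarrow> Y (Suc t) = Y (Suc t')"
proof -
  have partner: "f (r + e - q) True \<noteq> f (r + e - q) False"
  proof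
    assume "f (r + e - q) True = f (r + e - q) False"
    then have "f r (W s) = f r (W 0)" if "s \<le> T" for s
      using next_block[OF that r(1,2)] next_block[of 0, OF _ r(1,2)]
        bool_fun_const[of "f (r + e - q)" "Y (Suc s)" "Y (Suc 0)"] by simp
    then show False using W_column_nonconst[OF r(3)] by blast
  qed
  have "W t = W t' \<longleftrightarrow> f r (W t) = f r (W t')" by (rule bool_fun_eq_iff[OF r(3), symmetric])
  also have "\<dots> \<longleftrightarrow> f (r + e - q) (Y (Suc t)) = f (r + e - q) (Y (Suc t'))"
    using next_block[OF t(1) r(1,2)] next_block[OF t(2) r(1,2)] by simp
  also have "\<dots> \<longleftrightarrow> Y (Suc t) = Y (Suc t')" by (rule bool_fun_eq_iff[OF partner])
  finally show ?thesis .
qed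

text \<open>The columns of Y are shown constant by induction along r \<mapsto> r - e: columns left
  of e are reached from the next block and would make the successor in Y functional.\<close>
lemma active_column_same_block_absurd:
  assumes r: "r + e < q" "f r True \<noteq> f r False"
  shows False
proof -
  have pattern: "W t = W t' \<longleftrightarrow> Y t = Y t'" if "t \<le> T" "t' \<le> T" for t t'
    using W_eq_iff_Y_eq[OF r that] .
  obtain t1 where t1: "t1 \<le> T" "Y t1 \<noteq> Y 0"
    using W_nonconst pattern by blast
  have "f s True = f s False" if "s < q" for s
    using that
  proof (induction s rule: less_induct)
    case (less s)
    show ?case
    proof (cases "s < e")
      case True
      show ?thesis
      proof (rule ccontr)
        assume active: "f s True \<noteq> f s False"
        have "Y (Suc t) = Y (Suc t')" if "t \<le> T" "t' \<le> T" "Y t = Y t'" for t t'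
        proof -
          have "W t = W t'" using pattern that by blast
          then have "f s (Y (Suc t)) = f s (Y (Suc t'))"
            using next_block[OF that(1), of "s + q - e"] next_block[OF that(2), of "s + q - e"]
              True shift_less by simp
          then show ?thesis by (simp only: bool_fun_eq_iff[OF active])
        qed
        then show False using Y_successor_not_functional by blast
      qed
    next
      case False
      then have "f (s - e) True = f (s - e) False" using less.IH[of "s - e"] less.prems shift_pos by simp
      then have "f s (Y t1) = f s (Y 0)"
        using same_block[OF t1(1), of "s - e"] same_block[of 0 "s - e"] False less.prems
          bool_fun_const[of "f (s - e)" "W t1" "W 0"] by simp
      then show ?thesis by (rule bool_fun_const_if_eq[OF t1(2)])
    qed
  qed
  then have "f (r + e) True = f (r + e) False" using r(1) .
  then have "f r (W t) = f r (W 0)" if "t \<le> T" for t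
    using same_block[OF that r(1)] same_block[of 0, OF _ r(1)] bool_fun_const[of "f (r + e)" "Y t" "Y 0"]
    by simp
  then show False using W_column_nonconst[OF r(2)] by blast
qed

lemma active_column_next_block_absurd:
  assumes r: "r < q" "q \<le> r + e" "f r True \<noteq> f r False"
  shows False
proof -
  have pattern: "W t = W t' \<longleftrightarrow> Y (Suc t) = Y (Suc t')" if "t \<le> T" "t' \<le> T" for t t'
    using W_eq_iff_Y_Suc_eq[OF r that] .
  obtain t1 where t1: "t1 \<le> T" "W t1 \<noteq> W 0"
    using W_nonconst by blast
  have "f s True = f s False" if "s < q" for s
    using that
  proof (induction s rule: less_induct)
    case (less s)
    show ?case
    proof (cases "s + e < q")
      case True
      show ?thesis
      proof (rule ccontr)
        assume active: "f s True \<noteq> f s False"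
        have "Y (Suc t) = Y (Suc t')" if "t \<le> T" "t' \<le> T" "Y t = Y t'" for t t'
        proof -
          have "f s (W t) = f s (W t')"
            using same_block[OF that(1) True] same_block[OF that(2) True] that(3) by simp
          then show ?thesis using pattern[OF that(1,2)] by (simp only: bool_fun_eq_iff[OF active])
        qed
        then show False using Y_successor_not_functional by blast
      qed
    next
      case False
      then have "f (s + e - q) True = f (s + e - q) False"
        using less.IH[of "s + e - q"] less.prems shift_less by simp
      then have "f s (W t1) = f s (W 0)"
        using next_block[OF t1(1), of s] next_block[of 0 s] False less.prems
          bool_fun_const[of "f (s + e - q)" "Y (Suc t1)" "Y (Suc 0)"] by simp
      then show ?thesis by (rule bool_fun_const_if_eq[OF t1(2)])
    qed
  qed
  then show False using r by blast
qed

lemma columns_const: "r < q \<Longrightarrow> f r True = f r False"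
  using active_column_same_block_absurd active_column_next_block_absurd by (meson not_less)

end

lemma period2_window_shift: "period2_window (\<lambda>t. X (a + t)) n P \<longleftrightarrow> period2_window X (a + n) P"
  by (simp add: period2_window_def add.assoc)

text \<open>Recognizability: a coincidence of two windows starting in different columns would
  give two misaligned block codings of one word.\<close>
lemma mod_eq_if_long_agreement:
  fixes X :: "nat \<Rightarrow> bool" and f :: "nat \<Rightarrow> bool \<Rightarrow> bool"
  assumes rel: "\<And>n r. r < q \<Longrightarrow> X (q * n + r) = f r (X n)"
    and active: "s < q" "f s True \<noteq> f s False"
    and free: "\<And>n. \<not> period2_window X n P"
    and agree: "\<And>k. k < q * (P + 3) \<Longrightarrow> X (i + k) = X (j + k)"
  shows "i mod q = j mod q"
proof -
  have q: "0 < q" using active(1) by simp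
  have aligned_if_less: "i mod q = j mod q"
    if ji: "j < i" and agree: "\<And>k. k < q * (P + 3) \<Longrightarrow> X (i + k) = X (j + k)" for i j
  proof (rule ccontr)
    assume ne: "i mod q \<noteq> j mod q"
    define a where "a = i div q + 1"
    have a: "i < q * a" "q * a \<le> i + q"
      unfolding a_def distrib_left mult_1_right
      using mult_div_mod_eq[of q i] mod_less_divisor[OF q, of i] by linarith+
    define p where "p = q * a + j - i"
    define b where "b = p div q"
    define e where "e = p mod q"
    have p: "p = q * b + e" unfolding b_def e_def by simp
    have e: "0 < e" "e < q"
    proof -
      have "q * b + (e + i) = q * a + j" using a(1) ji p unfolding p_def by simp
      then have "(q * b + (e + i)) mod q = (q * a + j) mod q" by (rule arg_cong)
      then have "(e + i) mod q = j mod q" by simp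
      then show "0 < e" using ne by (cases "e = 0") auto
      show "e < q" using q unfolding e_def by simp
    qed
    have shift: "X (q * a + m) = X (q * b + e + m)" if "m < q * (P + 2)" for m
    proof -
      have "q * a - i + m < q * (P + 3)" using a(2) that by (simp add: distrib_left)
      then have "X (i + (q * a - i + m)) = X (j + (q * a - i + m))" by (rule agree)
      moreover have "i + (q * a - i + m) = q * a + m" "j + (q * a - i + m) = q * b + e + m"
        using a(1) p unfolding p_def by auto
      ultimately show ?thesis by simp
    qed
    have block: "q * t + r < q * (P + 2)" if "t \<le> P + 1" "r < q" for t r
    proof -
      have "q * t + r < q * (t + 1)" using that(2) by simp
      also have "\<dots> \<le> q * (P + 2)" using that(1) by (intro mult_le_mono2) simp
      finally show ?thesis .
    qed
    interpret misaligned_codings f q e "P + 1" "\<lambda>t. X (a + t)" "\<lambda>t. X (b + t)"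
    proof
      show "0 < e" "e < q" by (fact e)+
    next
      fix t r assume t: "t \<le> P + 1" and r: "r + e < q"
      have "f r (X (a + t)) = X (q * a + (q * t + r))" using rel[of r "a + t"] r by (simp add: algebra_simps)
      also have "\<dots> = X (q * (b + t) + (r + e))" using shift[OF block[OF t]] r by (simp add: algebra_simps)
      also have "\<dots> = f (r + e) (X (b + t))" using rel r by simp
      finally show "f r (X (a + t)) = f (r + e) (X (b + t))" .
    next
      fix t r assume t: "t \<le> P + 1" and r: "r < q" "q \<le> r + e"
      have "f r (X (a + t)) = X (q * a + (q * t + r))" using rel[of r "a + t"] r by (simp add: algebra_simps)
      also have "\<dots> = X (q * (b + Suc t) + (r + e - q))" using shift[OF block[OF t r(1)]] r by (simp add: algebra_simps)
      also have "\<dots> = f (r + e - q) (X (b + Suc t))" by (rule rel) (use r e in linarith)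
      finally show "f r (X (a + t)) = f (r + e - q) (X (b + Suc t))" .
    next
      show "\<exists>t\<le>P + 1. X (a + t) \<noteq> X (a + 0)"
        using period2_window_if_const[of P X a] free by auto
    next
      show "\<not> (\<forall>t t'. t \<le> P + 1 \<longrightarrow> t' \<le> P + 1 \<longrightarrow> X (b + t) = X (b + t') \<longrightarrow> X (b + Suc t) = X (b + Suc t'))"
        using period2_window_if_successor_functional[of P "\<lambda>t. X (b + t)"] free period2_window_shift
        by auto
    qed
    show False using columns_const[OF active(1)] active(2) by simp
  qed
  show ?thesis
    using aligned_if_less[of j i] aligned_if_less[of i j] agree by (metis linorder_cases)
qed

section \<open>The fixed point of a constant-length substitution\<close>

lemma alph_iff: "a \<in> alph \<longleftrightarrow> a = 0 \<or> a = 1"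
  by (auto simp: alph_def)

locale constant_length_fixed_point =
  fixes \<zeta> :: "nat \<Rightarrow> nat list" and q :: nat and x :: "nat \<Rightarrow> nat"
  assumes binary: "binary_subst \<zeta>" and q_ge_2: "2 \<le> q"
    and constant_length: "constant_length \<zeta> q"
    and starts_with_0: "hd (\<zeta> 0) = 0"
    and fixed_point: "is_fixed_point_limit \<zeta> x"
begin

lemma length_subst: "a \<in> alph \<Longrightarrow> length (\<zeta> a) = q"
  using constant_length by (simp add: constant_length_def)

lemma set_subst: "a \<in> alph \<Longrightarrow> set (\<zeta> a) \<subseteq> alph"
  using binary by (simp add: binary_subst_def)

lemma subst_word_pow_alph:
  assumes "set w \<subseteq> alph"
  shows "set (subst_word_pow \<zeta> K w) \<subseteq> alph \<and> length (subst_word_pow \<zeta> K w) = q ^ K * length w"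
proof (induction K)
  case 0
  then show ?case using assms by simp
next
  case (Suc K)
  then have "\<And>a. a \<in> set (subst_word_pow \<zeta> K w) \<Longrightarrow> length (\<zeta> a) = q"
    using length_subst by blast
  then show ?case using Suc set_subst by (auto simp: length_concat_map_const)
qed

lemma set_subst_pow: "a \<in> alph \<Longrightarrow> set (subst_pow \<zeta> K a) \<subseteq> alph"
  using subst_word_pow_alph[of "[a]" K] by (simp add: subst_pow_def)

lemma length_subst_pow: "a \<in> alph \<Longrightarrow> length (subst_pow \<zeta> K a) = q ^ K"
  using subst_word_pow_alph[of "[a]" K] by (simp add: subst_pow_def)

lemma nth_subst_pow_Suc:
  assumes "a \<in> alph" "n < q ^ K" "r < q"
  shows "subst_pow \<zeta> (Suc K) a ! (q * n + r) = \<zeta> (subst_pow \<zeta> K a ! n) ! r"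
  using nth_concat_map_const[of "subst_pow \<zeta> K a" \<zeta> q n r] assms
    set_subst_pow[OF assms(1)] length_subst_pow[OF assms(1)] length_subst
  by (auto simp: subst_pow_def)

lemma less_q_pow: "n < q ^ n"
  using less_exp[of n] power_mono[OF q_ge_2, of n] by linarith

lemma x_eq_nth_subst_pow: "n < q ^ K \<Longrightarrow> x n = subst_pow \<zeta> K 0 ! n"
  using fixed_point length_subst_pow[of 0 K] by (simp add: is_fixed_point_limit_def alph_def)

lemma x_in_alph: "x n \<in> alph"
  using x_eq_nth_subst_pow[OF less_q_pow] set_subst_pow[of 0 n] length_subst_pow[of 0 n] less_q_pow
  by (metis alph_iff nth_mem subsetD)

lemma x_mult_add: "r < q \<Longrightarrow> x (q * n + r) = \<zeta> (x n) ! r"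
proof -
  assume r: "r < q"
  have "q * n + r < q * Suc n" using r by simp
  also have "\<dots> \<le> q * q ^ n" using less_q_pow[of n] by (intro mult_le_mono2) simp
  also have "\<dots> = q ^ Suc n" by simp
  finally have "x (q * n + r) = subst_pow \<zeta> (Suc n) 0 ! (q * n + r)" by (rule x_eq_nth_subst_pow)
  also have "\<dots> = \<zeta> (subst_pow \<zeta> n 0 ! n) ! r"
    using nth_subst_pow_Suc less_q_pow r by (simp add: alph_def)
  also have "\<dots> = \<zeta> (x n) ! r" using x_eq_nth_subst_pow[OF less_q_pow] by simp
  finally show ?thesis .
qed

lemma x_pow_mult_add: "r < q ^ K \<Longrightarrow> x (q ^ K * n + r) = subst_pow \<zeta> K (x n) ! r"
proof (induction K arbitrary: r)
  case 0
  then show ?case by (simp add: subst_pow_def)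
next
  case (Suc K)
  have q: "0 < q" using q_ge_2 by simp
  have r: "r = q * (r div q) + r mod q" by simp
  have "r div q < q ^ K" using Suc.prems by (simp add: less_mult_imp_div_less mult.commute)
  moreover have "r mod q < q" using q by simp
  moreover have "q ^ Suc K * n + r = q * (q ^ K * n + r div q) + r mod q"
    by (subst r) (simp add: algebra_simps)
  ultimately show ?case
    using x_mult_add Suc.IH nth_subst_pow_Suc[OF x_in_alph] by (metis r)
qed

lemma subst_0_nth_0: "\<zeta> 0 ! 0 = 0"
proof -
  have "\<zeta> 0 \<noteq> []" using length_subst[of 0] q_ge_2 by (auto simp: alph_def)
  then show ?thesis using starts_with_0 by (simp add: hd_conv_nth)
qed

lemma x_0: "x 0 = 0"
proof -
  have "x 0 = subst_pow \<zeta> 1 0 ! 0" using q_ge_2 by (intro x_eq_nth_subst_pow) simp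
  then show ?thesis using subst_0_nth_0 by (simp add: subst_pow_def)
qed

definition first_diff_column :: nat where
  "first_diff_column = (LEAST r. r < q \<and> \<zeta> 0 ! r \<noteq> \<zeta> 1 ! r)"

definition last_diff_column :: nat where
  "last_diff_column = (GREATEST r. r < q \<and> \<zeta> 0 ! r \<noteq> \<zeta> 1 ! r)"

lemma x_mult_add_neqD:
  "r < q \<Longrightarrow> x (q * n + r) \<noteq> x (q * n' + r) \<Longrightarrow> x n \<noteq> x n' \<and> \<zeta> 0 ! r \<noteq> \<zeta> 1 ! r"
  using x_mult_add[of r n] x_mult_add[of r n'] x_in_alph[of n] x_in_alph[of n']
  by (auto simp: alph_iff)

lemma column_eq_if_x_mult_add_eq:
  "r < q \<Longrightarrow> x n \<noteq> x n' \<Longrightarrow> x (q * n + r) = x (q * n' + r) \<Longrightarrow> \<zeta> 0 ! r = \<zeta> 1 ! r"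
  using x_mult_add[of r n] x_mult_add[of r n'] x_in_alph[of n] x_in_alph[of n']
  by (auto simp: alph_iff)

lemma x_eq_if_x_mult_add_eq:
  "r < q \<Longrightarrow> \<zeta> 0 ! r \<noteq> \<zeta> 1 ! r \<Longrightarrow> x (q * n + r) = x (q * n' + r) \<Longrightarrow> x n = x n'"
  using x_mult_add[of r n] x_mult_add[of r n'] x_in_alph[of n] x_in_alph[of n']
  by (auto simp: alph_iff)

lemma last_mismatch_column:
  assumes r: "r < q" and neq: "x (q * n + r) \<noteq> x (q * n' + r)"
    and after: "\<And>s. r < s \<Longrightarrow> s < q \<Longrightarrow> x (q * n + s) = x (q * n' + s)"
  shows "r = last_diff_column" "x n \<noteq> x n'"
proof -
  show parents: "x n \<noteq> x n'" using x_mult_add_neqD[OF r neq] by blast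
  show "r = last_diff_column"
    unfolding last_diff_column_def
  proof (rule Greatest_equality[symmetric])
    show "r < q \<and> \<zeta> 0 ! r \<noteq> \<zeta> 1 ! r" using r x_mult_add_neqD[OF r neq] by blast
    show "s \<le> r" if "s < q \<and> \<zeta> 0 ! s \<noteq> \<zeta> 1 ! s" for s
      using that after column_eq_if_x_mult_add_eq[OF _ parents] not_le by metis
  qed
qed

lemma first_mismatch_column:
  assumes r: "r < q" and neq: "x (q * n + r) \<noteq> x (q * n' + r)"
    and before: "\<And>s. s < r \<Longrightarrow> x (q * n + s) = x (q * n' + s)"
  shows "r = first_diff_column" "x n \<noteq> x n'"
proof -
  show parents: "x n \<noteq> x n'" using x_mult_add_neqD[OF r neq] by blast
  show "r = first_diff_column"
    unfolding first_diff_column_def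
  proof (rule Least_equality[symmetric])
    show "r < q \<and> \<zeta> 0 ! r \<noteq> \<zeta> 1 ! r" using r x_mult_add_neqD[OF r neq] by blast
    show "r \<le> s" if "s < q \<and> \<zeta> 0 ! s \<noteq> \<zeta> 1 ! s" for s
      using that before column_eq_if_x_mult_add_eq[OF _ parents] not_le by metis
  qed
qed

text \<open>The mismatch just left of the line sits in the last column where \<zeta> 0 and \<zeta> 1
  differ, the one just right of it in the first such column, and the parent blocks in
  between form an inner line.\<close>
lemma inner_line_desubstitution:
  assumes line: "(i, j) \<in> inner_lines x l" and long: "2 * q + 1 \<le> l"
    and aligned: "i mod q = j mod q"
  shows "\<exists>L\<ge>1. inner_lines x L \<noteq> {} \<and> l = q * L + (q - 1 - last_diff_column + first_diff_column)"
proof -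
  have q: "0 < q" using q_ge_2 by simp
  from line have i0: "0 < i" and j0: "0 < j" and ij: "i \<noteq> j"
    and eq: "\<And>k. k < l \<Longrightarrow> x (i + k) = x (j + k)"
    and left: "x (i - 1) \<noteq> x (j - 1)" and right: "x (i + l) \<noteq> x (j + l)"
    by (auto simp: inner_lines_def rp_line_def rp_entry_def)
  define \<rho> where "\<rho> = (i - 1) mod q"
  define n0 where "n0 = (i - 1) div q"
  define n0' where "n0' = (j - 1) div q"
  have \<rho>: "\<rho> < q" using q unfolding \<rho>_def by simp
  have "(j - 1) mod q = \<rho>"
  proof -
    have "(i + (q - 1)) mod q = (j + (q - 1)) mod q" using aligned by (metis mod_add_left_eq)
    moreover have "i + (q - 1) = (i - 1) + q" "j + (q - 1) = (j - 1) + q" using i0 j0 q by auto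
    ultimately show ?thesis unfolding \<rho>_def by simp
  qed
  then have start: "i = q * n0 + \<rho> + 1" "j = q * n0' + \<rho> + 1"
    using i0 j0 unfolding n0_def n0'_def \<rho>_def by (metis Suc_diff_1 Suc_eq_plus1 mult_div_mod_eq)+
  define \<rho>1 where "\<rho>1 = (i + l) mod q"
  define n1 where "n1 = (i + l) div q"
  define n1' where "n1' = (j + l) div q"
  have \<rho>1: "\<rho>1 < q" using q unfolding \<rho>1_def by simp
  have "(j + l) mod q = \<rho>1" unfolding \<rho>1_def using aligned by (metis mod_add_left_eq)
  then have stop: "i + l = q * n1 + \<rho>1" "j + l = q * n1' + \<rho>1"
    unfolding n1_def n1'_def \<rho>1_def by (metis mult_div_mod_eq)+
  have "\<rho> = last_diff_column" "x n0 \<noteq> x n0'"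
  proof -
    have "x (q * n0 + s) = x (q * n0' + s)" if "\<rho> < s" "s < q" for s
      using eq[of "s - \<rho> - 1"] start that long by (simp add: algebra_simps)
    then show "\<rho> = last_diff_column" "x n0 \<noteq> x n0'"
      using last_mismatch_column[OF \<rho>, of n0 n0'] left start by simp_all
  qed
  note last = this
  have "\<rho>1 = first_diff_column" "x n1 \<noteq> x n1'"
  proof -
    have "x (q * n1 + s) = x (q * n1' + s)" if "s < \<rho>1" for s
    proof -
      have "x (i + (l - (\<rho>1 - s))) = x (j + (l - (\<rho>1 - s)))" using eq that long by simp
      moreover have "i + (l - (\<rho>1 - s)) = q * n1 + s" "j + (l - (\<rho>1 - s)) = q * n1' + s"
        using stop that long \<rho>1 by auto
      ultimately show ?thesis by simp
    qed
    then show "\<rho>1 = first_diff_column" "x n1 \<noteq> x n1'"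
      using first_mismatch_column[OF \<rho>1, of n1 n1'] right stop by simp_all
  qed
  note first = this
  have diff_column: "\<zeta> 0 ! \<rho>1 \<noteq> \<zeta> 1 ! \<rho>1"
    using x_mult_add_neqD[OF \<rho>1, of n1 n1'] right stop by simp
  have "q * (n0 + 1) < q * n1" using start stop long \<rho>1 by (simp add: distrib_left)
  then have n01: "n0 + 1 < n1" by (rule mult_left_less_imp_less) simp
  have "q * (n1 + n0') = q * (n1' + n0)" using start stop by (simp add: distrib_left)
  then have n1': "n1 + n0' = n1' + n0" using q by simp
  define L where "L = n1 - (n0 + 1)"
  have ends: "n0 + 1 + L = n1" "n0' + 1 + L = n1'" using n01 n1' unfolding L_def by auto
  have interior: "x (n0 + 1 + t) = x (n0' + 1 + t)" if "t < L" for t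
  proof (rule x_eq_if_x_mult_add_eq[OF \<rho>1 diff_column])
    define k where "k = q * (n0 + 1 + t) + \<rho>1 - i"
    have "q * (n0 + 1 + t) + q \<le> q * n1"
      using that ends(1) mult_le_mono2[of "n0 + 1 + t + 1" n1 q] by (simp add: algebra_simps)
    then have "k < l" using start stop \<rho> \<rho>1 unfolding k_def by (simp add: algebra_simps)
    moreover have "i + k = q * (n0 + 1 + t) + \<rho>1" "j + k = q * (n0' + 1 + t) + \<rho>1"
      using start \<rho> unfolding k_def by (simp_all add: algebra_simps)
    ultimately show "x (q * (n0 + 1 + t) + \<rho>1) = x (q * (n0' + 1 + t) + \<rho>1)" using eq by metis
  qed
  have "(n0 + 1, n0' + 1) \<in> inner_lines x L"
    using start ij interior last(2) first(2) ends
    by (auto simp: inner_lines_def rp_line_def rp_entry_def)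
  moreover have "1 \<le> L" using n01 unfolding L_def by simp
  moreover have "l = q * L + (q - 1 - last_diff_column + first_diff_column)"
  proof -
    have "q * n0 + q + q * L = q * n1" using ends(1) by (simp add: algebra_simps flip: ends(1))
    then show ?thesis unfolding last(1)[symmetric] first(1)[symmetric] using start stop \<rho> by linarith
  qed
  ultimately show ?thesis by blast
qed

end

locale primitive_aperiodic_fixed_point = constant_length_fixed_point +
  assumes primitive: "primitive_subst \<zeta>" and aperiodic: "aperiodic_subst \<zeta>"
begin

lemma letter_occurs:
  assumes "a \<in> alph"
  shows "\<exists>m. x m = a"
proof -
  obtain k where "\<forall>a\<in>alph. \<forall>b\<in>alph. b \<in> set (subst_pow \<zeta> k a)"
    using primitive by (auto simp: primitive_subst_def)
  then have "a \<in> set (subst_pow \<zeta> k 0)" using assms by (auto simp: alph_def)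
  then obtain r where "r < q ^ k" "subst_pow \<zeta> k 0 ! r = a"
    using length_subst_pow[of 0 k] by (auto simp: in_set_conv_nth alph_def)
  then have "x r = a" using x_pow_mult_add[of r k 0] x_0 by simp
  then show ?thesis by blast
qed

lemma language_occurs:
  assumes "w \<in> subst_language \<zeta>"
  shows "\<exists>s. \<forall>t<length w. x (s + t) = w ! t"
proof -
  obtain K a u v where a: "a \<in> alph" and w: "subst_pow \<zeta> K a = u @ w @ v"
    using assms by (auto simp: subst_language_def)
  obtain m where m: "x m = a" using letter_occurs[OF a] by blast
  have "x (q ^ K * m + length u + t) = w ! t" if "t < length w" for t
  proof -
    have "length u + t < q ^ K" using that w length_subst_pow[OF a, of K] by simp
    then have "x (q ^ K * m + (length u + t)) = subst_pow \<zeta> K a ! (length u + t)"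
      using x_pow_mult_add m by simp
    then show ?thesis using w that by (simp add: nth_append add.assoc)
  qed
  then show ?thesis by blast
qed

lemma x_not_periodic:
  assumes "0 < p"
  shows "\<exists>n. x (n + p) \<noteq> x n"
proof (rule ccontr)
  assume "\<not> ?thesis"
  then have per: "x (n + p) = x n" for n by simp
  obtain y where y: "y \<in> subshift \<zeta>" "\<not> shift_periodic y"
    using aperiodic by (auto simp: aperiodic_subst_def)
  have "y (n + p) = y n" for n
  proof -
    have "map (\<lambda>m. y (n + m)) [0..<p + 1] \<in> subst_language \<zeta>"
      using y(1) unfolding subshift_def by blast
    from language_occurs[OF this] obtain s
      where s: "\<forall>t<p + 1. x (s + t) = map (\<lambda>m. y (n + m)) [0..<p + 1] ! t" by auto
    have "x (s + p) = y (n + p)" "x (s + 0) = y (n + 0)"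
      using s[rule_format, of p] s[rule_format, of 0] by (simp_all del: upt_Suc)
    then show ?thesis using per[of s] by simp
  qed
  then show False using y(2) assms unfolding shift_periodic_def by blast
qed

lemma diff_column_exists: "\<exists>r<q. \<zeta> 0 ! r \<noteq> \<zeta> 1 ! r"
proof (rule ccontr)
  assume "\<not> ?thesis"
  then have same: "\<zeta> 0 ! r = \<zeta> 1 ! r" if "r < q" for r using that by auto
  have q: "0 < q" using q_ge_2 by simp
  have "x (n + q) = x n" for n
  proof -
    have r: "n mod q < q" using q by simp
    have "x (n + q) = x (q * (n div q + 1) + n mod q)" by (simp add: algebra_simps)
    also have "\<dots> = \<zeta> (x (n div q + 1)) ! (n mod q)" by (rule x_mult_add[OF r])
    also have "\<dots> = \<zeta> (x (n div q)) ! (n mod q)"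
      using x_in_alph[of "n div q + 1"] x_in_alph[of "n div q"] same[OF r] by (auto simp: alph_iff)
    also have "\<dots> = x (q * (n div q) + n mod q)" by (rule x_mult_add[OF r, symmetric])
    finally show ?thesis by simp
  qed
  then show False using x_not_periodic[OF q] by simp
qed

lemma subst_1_contains_0: "\<exists>r<q. \<zeta> 1 ! r = 0"
proof (rule ccontr)
  assume no_0: "\<not> ?thesis"
  have "set (\<zeta> 1) \<subseteq> {1}"
  proof
    fix a assume "a \<in> set (\<zeta> 1)"
    then obtain r where "r < q" "\<zeta> 1 ! r = a"
      using length_subst[of 1] by (auto simp: in_set_conv_nth alph_def)
    then have "a \<noteq> 0" using no_0 by auto
    moreover have "a \<in> alph" using set_subst[of 1] \<open>a \<in> set (\<zeta> 1)\<close> by (auto simp: alph_def)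
    ultimately show "a \<in> {1}" by (simp add: alph_iff)
  qed
  then have "set (subst_word_pow \<zeta> K [1]) \<subseteq> {1}" for K
    by (induction K) auto
  moreover obtain k where "\<forall>a\<in>alph. \<forall>b\<in>alph. b \<in> set (subst_pow \<zeta> k a)"
    using primitive by (auto simp: primitive_subst_def)
  then have "0 \<in> set (subst_pow \<zeta> k 1)" by (simp add: alph_def)
  ultimately show False by (auto simp: subst_pow_def)
qed

lemma zero_in_block: "\<exists>m. q * c \<le> m \<and> m < q * c + q \<and> x m = 0"
proof (cases "x c = 0")
  case True
  then have "x (q * c + 0) = 0" using x_mult_add[of 0 c] q_ge_2 subst_0_nth_0 by simp
  then show ?thesis using q_ge_2 by (intro exI[of _ "q * c"]) simp
next
  case False
  then have "x c = 1" using x_in_alph[of c] by (simp add: alph_iff)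
  moreover obtain r where "r < q" "\<zeta> 1 ! r = 0" using subst_1_contains_0 by blast
  ultimately show ?thesis using x_mult_add[of r c] by (intro exI[of _ "q * c + r"]) simp
qed

lemma zero_nearby: "\<exists>m. a \<le> m \<and> m < a + 2 * q \<and> x m = 0"
proof -
  obtain m where m: "q * (a div q + 1) \<le> m" "m < q * (a div q + 1) + q" "x m = 0"
    using zero_in_block by blast
  have "q * (a div q) \<le> a" "a < q * (a div q) + q"
    using mult_div_mod_eq[of q a] mod_less_divisor[of q a] q_ge_2 by linarith+
  moreover have "q * (a div q + 1) = q * (a div q) + q" by simp
  ultimately have "a \<le> m" "m < a + 2 * q" using m(1,2) by linarith+
  then show ?thesis using m(3) by blast
qed

lemma x_pow_mult_add_of_zero: "x m = 0 \<Longrightarrow> r < q ^ K \<Longrightarrow> x (q ^ K * m + r) = x r"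
  using x_pow_mult_add[of r K m] x_pow_mult_add[of r K 0] x_0 by simp

definition x_bit :: "nat \<Rightarrow> bool" where
  "x_bit n \<longleftrightarrow> x n = 1"

definition column :: "nat \<Rightarrow> bool \<Rightarrow> bool" where
  "column r b \<longleftrightarrow> \<zeta> (if b then 1 else 0) ! r = 1"

lemma x_eq_iff_x_bit_eq: "x m = x n \<longleftrightarrow> x_bit m = x_bit n"
  using x_in_alph[of m] x_in_alph[of n] by (auto simp: x_bit_def alph_iff)

lemma x_bit_mult_add: "r < q \<Longrightarrow> x_bit (q * n + r) = column r (x_bit n)"
  using x_mult_add[of r n] x_in_alph[of n] by (auto simp: x_bit_def column_def alph_iff)

lemma active_column_exists: "\<exists>r<q. column r True \<noteq> column r False"
proof -
  obtain r where r: "r < q" "\<zeta> 0 ! r \<noteq> \<zeta> 1 ! r" using diff_column_exists by blast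
  have "\<zeta> 0 ! r \<in> alph" "\<zeta> 1 ! r \<in> alph"
    using set_subst length_subst r(1) by (auto simp: alph_def intro: nth_mem)
  then show ?thesis using r by (intro exI[of _ r]) (auto simp: column_def alph_iff)
qed

lemma no_long_period2_window: "\<exists>P. \<forall>n. \<not> period2_window x_bit n P"
proof (rule ccontr)
  assume "\<not> ?thesis"
  then obtain window where window: "\<And>P. period2_window x_bit (window P) P" by metis
  have "x_bit (r + 2) = x_bit r" for r
  proof -
    define N where "N = q ^ (r + 2)"
    define n where "n = window (N * (2 * q + 1))"
    have rN: "r + 2 < N" unfolding N_def by (rule less_q_pow)
    define m0 where "m0 = n div N + 1"
    have "0 < N" using rN by simp
    moreover have "N * m0 = N * (n div N) + N" unfolding m0_def by simp
    ultimately have m0: "n < N * m0" "N * m0 \<le> n + N"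
      using mult_div_mod_eq[of N n] mod_less_divisor[of N n] by linarith+
    obtain m where m: "m0 \<le> m" "m < m0 + 2 * q" "x m = 0" using zero_nearby by blast
    have "N * (m + 1) \<le> N * (m0 + 2 * q)" using m(2) by (intro mult_le_mono2) simp
    then have "N * m + r - n < N * (2 * q + 1)"
      using m0 rN by (simp add: algebra_simps)
    then have "x_bit (n + (N * m + r - n) + 2) = x_bit (n + (N * m + r - n))"
      using window[of "N * (2 * q + 1)", unfolded period2_window_def, rule_format]
      unfolding n_def by simp
    moreover have "n \<le> N * m" using m0(1) m(1) mult_le_mono2[of m0 m N] by linarith
    ultimately have "x_bit (N * m + (r + 2)) = x_bit (N * m + r)" by (simp add: add.assoc)
    moreover have "x (N * m + (r + 2)) = x (r + 2)" "x (N * m + r) = x r"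
      using rN unfolding N_def by (intro x_pow_mult_add_of_zero[OF m(3)]; simp)+
    then have "x_bit (N * m + (r + 2)) = x_bit (r + 2)" "x_bit (N * m + r) = x_bit r"
      by (simp_all add: x_eq_iff_x_bit_eq)
    ultimately show ?thesis by simp
  qed
  then have "x (n + 2) = x n" for n by (simp add: x_eq_iff_x_bit_eq)
  then show False using x_not_periodic[of 2] by simp
qed

lemma x_recognizable: "\<exists>M. \<forall>i j. (\<forall>k<M. x (i + k) = x (j + k)) \<longrightarrow> i mod q = j mod q"
proof -
  obtain P where P: "\<And>n. \<not> period2_window x_bit n P" using no_long_period2_window by blast
  obtain r0 where r0: "r0 < q" "column r0 True \<noteq> column r0 False" using active_column_exists by blast
  show ?thesis
  proof (intro exI[of _ "q * (P + 3)"] allI impI)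
    fix i j assume agree: "\<forall>k<q * (P + 3). x (i + k) = x (j + k)"
    have agree_bit: "x_bit (i + k) = x_bit (j + k)" if "k < q * (P + 3)" for k
      using agree that x_eq_iff_x_bit_eq[of "i + k" "j + k"] by simp
    show "i mod q = j mod q"
      by (rule mod_eq_if_long_agreement[where X = x_bit and f = column and s = r0 and P = P])
        (simp_all add: x_bit_mult_add r0 P agree_bit)
  qed
qed

lemma summable_inverse_inner_line_lengths:
  "(\<lambda>l. 1 / real l) summable_on {l. 1 \<le> l \<and> inner_lines x l \<noteq> {}}"
proof -
  obtain M where M: "\<And>i j. \<forall>k<M. x (i + k) = x (j + k) \<Longrightarrow> i mod q = j mod q"
    using x_recognizable by blast
  show ?thesis
  proof (rule summable_on_inverse_if_affine_descent[OF q_ge_2, where M = "M + 2 * q + 1"])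
    fix l assume "l \<in> {l. 1 \<le> l \<and> inner_lines x l \<noteq> {}}" and long: "M + 2 * q + 1 \<le> l"
    then obtain i j where line: "(i, j) \<in> inner_lines x l" by auto
    then have "\<forall>k<M. x (i + k) = x (j + k)" using long
      by (auto simp: inner_lines_def rp_line_def rp_entry_def)
    then have aligned: "i mod q = j mod q" by (rule M)
    obtain L where "1 \<le> L" "inner_lines x L \<noteq> {}"
      "l = q * L + (q - 1 - last_diff_column + first_diff_column)"
      using inner_line_desubstitution[OF line _ aligned] long by auto
    then show "\<exists>L\<in>{l. 1 \<le> l \<and> inner_lines x l \<noteq> {}}.
        l = q * L + (q - 1 - last_diff_column + first_diff_column)" by blast
  qed simp
qed

end

theorem lemma3p2:
  fixes \<zeta> :: "nat \<Rightarrow> nat list" and q :: nat and x :: "nat \<Rightarrow> nat"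
  assumes "binary_subst \<zeta>"
    and "q \<ge> 2" and "constant_length \<zeta> q"
    and "primitive_subst \<zeta>"
    and "aperiodic_subst \<zeta>"
    and "hd (\<zeta> 0) = 0"
    and "is_fixed_point_limit \<zeta> x"
  shows "(\<lambda>l. 1 / real l) summable_on {l::nat. l \<ge> 1 \<and> inner_lines x l \<noteq> {}}"
proof -
  interpret primitive_aperiodic_fixed_point \<zeta> q x
    using assms by unfold_locales
  show ?thesis by (rule summable_inverse_inner_line_lengths)
qed

end
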